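(* Let $D=(V,A)$ be a digraph with minimum dicut size $\tau$ and let $k\ge 2$ be rational. If the underlying undirected graph $G$ of $D$ admits a nowhere-zero circular $k$-flow, then the digraph $\vec G=(V,A\cup A^{-1})$ with weight $w^D$ can pack two $\lfloor\tau/k\rfloor$-SCD's; i.e., there exist integral vectors $x^1,x^2\in\mathbb{Z}_{\ge0}^{A\cup A^{-1}}$ with $x^1+x^2\le w^D$ (in fact one may take $x^1+x^2=w^D$) such that $x^i(\delta^+_{\vec G}(U))\ge\lfloor\tau/k\rfloor$ for $i=1,2$ and all $\emptyset\neq U\subsetneq V$.
   Context: Digraphs/graphs are finite and loopless; parallel arcs/edges allowed. For $\emptyset\neq U\subsetneq V$, $\delta^+(U)$ / $\delta^-(U)$ denote arcs leaving/entering $U$. A dicut of $D$ is $\delta^+_D(U)$ with $\emptyset\neq U\subsetneq V$ and $\delta^-_D(U)=\emptyset$; "$D$ has minimum dicut size $\tau$" means $D$ has at least one dicut and the minimum number of arcs in a dicut is $\tau$. The underlying undirected graph replaces each arc $(u,v)$ by an edge $\{u,v\}$. $A^{-1}$ denotes the set of reverses $a^{-1}$ of arcs $a\in A$; $\vec G$ has vertex set $V$ and arc set $A\cup A^{-1}$, with weight $w^D_a=\tau$ for $a\in A$ and $w^D_{a^{-1}}=1$. For a positive integer $t$, a $t$-SCD ($t$-strongly-connected digraph) of $\vec G$ is a vector $x\in\mathbb{Z}_{\ge0}^{A\cup A^{-1}}$ with $x(\delta^+_{\vec G}(U))\ge t$ for all $\emptyset\neq U\subsetneq V$, where $x(B)=\sum_{e\in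 B}x_e$. For rational $k\ge2$, a nowhere-zero circular $k$-flow of an undirected graph $G$ is a pair $(E^+,f)$ with $E^+$ an orientation of $G$ and $f:E^+\to[1,k-1]$ real-valued satisfying flow conservation at every vertex. *)

theory Defs
  imports Complex_Main
begin

text \<open>A digraph is given by a finite vertex set V, a finite arc set A (arcs are
abstract objects, so parallel arcs are allowed) and tail/head maps tail, head.\<close>

definition digraph :: "'a set \<Rightarrow> 'b set \<Rightarrow> ('b \<Rightarrow> 'a) \<Rightarrow> ('b \<Rightarrow> 'a) \<Rightarrow> bool" where
  "digraph V A tail head \<longleftrightarrow> finite V \<and> finite A \<and>
     (\<forall>a\<in>A. tail a \<in> V \<and> head a \<in> V \<and> tail a \<noteq> head a)"

definition out_arcs :: "'b set \<Rightarrow> ('b \<Rightarrow> 'a) \<Rightarrow> ('b \<Rightarrow> 'a) \<Rightarrow> 'a set \<Rightarrow> 'b set" where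
  "out_arcs A tail head U = {a \<in> A. tail a \<in> U \<and> head a \<notin> U}"

definition in_arcs :: "'b set \<Rightarrow> ('b \<Rightarrow> 'a) \<Rightarrow> ('b \<Rightarrow> 'a) \<Rightarrow> 'a set \<Rightarrow> 'b set" where
  "in_arcs A tail head U = {a \<in> A. head a \<in> U \<and> tail a \<notin> U}"

definition dicut_shore :: "'a set \<Rightarrow> 'b set \<Rightarrow> ('b \<Rightarrow> 'a) \<Rightarrow> ('b \<Rightarrow> 'a) \<Rightarrow> 'a set \<Rightarrow> bool" where
  "dicut_shore V A tail head U \<longleftrightarrow> U \<noteq> {} \<and> U \<subset> V \<and> in_arcs A tail head U = {}"

definition min_dicut_size :: "'a set \<Rightarrow> 'b set \<Rightarrow> ('b \<Rightarrow> 'a) \<Rightarrow> ('b \<Rightarrow> 'a) \<Rightarrow> nat \<Rightarrow> bool" where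
  "min_dicut_size V A tail head \<tau> \<longleftrightarrow>
     (\<exists>U. dicut_shore V A tail head U \<and> card (out_arcs A tail head U) = \<tau>) \<and>
     (\<forall>U. dicut_shore V A tail head U \<longrightarrow> \<tau> \<le> card (out_arcs A tail head U))"

text \<open>Nowhere-zero circular k-flow of the underlying undirected graph: each edge
(= arc a) gets an orientation (forward a: same direction as a, otherwise reversed)
and a real value f a in [1, k-1]; flow conservation holds at every vertex.\<close>
definition ori_tail :: "('b \<Rightarrow> bool) \<Rightarrow> ('b \<Rightarrow> 'a) \<Rightarrow> ('b \<Rightarrow> 'a) \<Rightarrow> 'b \<Rightarrow> 'a" where
  "ori_tail forward tail head a = (if forward a then tail a else head a)"

definition ori_head :: "('b \<Rightarrow> bool) \<Rightarrow> ('b \<Rightarrow> 'a) \<Rightarrow> ('b \<Rightarrow> 'a) \<Rightarrow> 'b \<Rightarrow> 'a" where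
  "ori_head forward tail head a = (if forward a then head a else tail a)"

definition nz_circular_flow ::
  "'a set \<Rightarrow> 'b set \<Rightarrow> ('b \<Rightarrow> 'a) \<Rightarrow> ('b \<Rightarrow> 'a) \<Rightarrow> real \<Rightarrow> ('b \<Rightarrow> bool) \<Rightarrow> ('b \<Rightarrow> real) \<Rightarrow> bool" where
  "nz_circular_flow V A tail head k forward f \<longleftrightarrow>
     (\<forall>a\<in>A. 1 \<le> f a \<and> f a \<le> k - 1) \<and>
     (\<forall>v\<in>V. (\<Sum>a\<in>{a\<in>A. ori_tail forward tail head a = v}. f a)
           = (\<Sum>a\<in>{a\<in>A. ori_head forward tail head a = v}. f a))"

definition has_nz_circular_flow :: "'a set \<Rightarrow> 'b set \<Rightarrow> ('b \<Rightarrow> 'a) \<Rightarrow> ('b \<Rightarrow> 'a) \<Rightarrow> real \<Rightarrow> bool" where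
  "has_nz_circular_flow V A tail head k \<longleftrightarrow> (\<exists>forward f. nz_circular_flow V A tail head k forward f)"

text \<open>The digraph vec G: arc set A \<union> A^{-1}, encoded as Inl ` A \<union> Inr ` A, where
Inr a is the reverse a^{-1} of a.\<close>
definition bi_arcs :: "'b set \<Rightarrow> ('b + 'b) set" where
  "bi_arcs A = Inl ` A \<union> Inr ` A"

fun bi_tail :: "('b \<Rightarrow> 'a) \<Rightarrow> ('b \<Rightarrow> 'a) \<Rightarrow> 'b + 'b \<Rightarrow> 'a" where
  "bi_tail tail head (Inl a) = tail a"
| "bi_tail tail head (Inr a) = head a"

fun bi_head :: "('b \<Rightarrow> 'a) \<Rightarrow> ('b \<Rightarrow> 'a) \<Rightarrow> 'b + 'b \<Rightarrow> 'a" where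
  "bi_head tail head (Inl a) = head a"
| "bi_head tail head (Inr a) = tail a"

fun wD :: "nat \<Rightarrow> 'b + 'b \<Rightarrow> nat" where
  "wD \<tau> (Inl a) = \<tau>"
| "wD \<tau> (Inr a) = 1"

definition bi_out :: "'b set \<Rightarrow> ('b \<Rightarrow> 'a) \<Rightarrow> ('b \<Rightarrow> 'a) \<Rightarrow> 'a set \<Rightarrow> ('b + 'b) set" where
  "bi_out A tail head U = {e \<in> bi_arcs A. bi_tail tail head e \<in> U \<and> bi_head tail head e \<notin> U}"

definition is_SCD :: "'a set \<Rightarrow> 'b set \<Rightarrow> ('b \<Rightarrow> 'a) \<Rightarrow> ('b \<Rightarrow> 'a) \<Rightarrow> nat \<Rightarrow> ('b + 'b \<Rightarrow> nat) \<Rightarrow> bool" where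
  "is_SCD V A tail head t x \<longleftrightarrow>
     (\<forall>U. U \<noteq> {} \<and> U \<subset> V \<longrightarrow> t \<le> (\<Sum>e\<in>bi_out A tail head U. x e))"

end

theory Submission
  imports Defs
begin

text \<open>Orient every arc as the circular flow does. For a set U that no arc of D leaves, the
arcs entering U split into those the flow orientation keeps (flow into U) and those it
reverses (flow out of U); conservation balances the two flow totals, and since every flow
value lies in [1, k-1], each part contains at least a 1/k fraction of the arcs entering U,
hence at least \<tau>/k arcs. So taking \<lfloor>\<tau>/k\<rfloor> on every arc of A together with the reverses
of the kept arcs, respectively of the reversed arcs, gives two SCDs that share w^D.\<close>

lemma conservation_sum_tails_eq_sum_heads:
  fixes f :: "'b \<Rightarrow> real"
  assumes "finite A" "finite U"
    and cons: "\<forall>v\<in>U. (\<Sum>a\<in>{a\<in>A. ot a = v}. f a) = (\<Sum>a\<in>{a\<in>A. oh a = v}. f a)"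
  shows "(\<Sum>a\<in>{a\<in>A. ot a \<in> U}. f a) = (\<Sum>a\<in>{a\<in>A. oh a \<in> U}. f a)"
proof -
  have group: "(\<Sum>a\<in>{a\<in>A. g a \<in> U}. f a) = (\<Sum>v\<in>U. \<Sum>a\<in>{a\<in>A. g a = v}. f a)"
    for g :: "'b \<Rightarrow> 'a"
  proof -
    have "(\<Sum>a\<in>{a\<in>A. g a \<in> U}. f a) = (\<Sum>v\<in>U. \<Sum>a\<in>{x \<in> {a\<in>A. g a \<in> U}. g x = v}. f a)"
      using sum.group[of "{a\<in>A. g a \<in> U}" U g f] assms(1,2) by (simp add: image_subset_iff)
    also have "\<dots> = (\<Sum>v\<in>U. \<Sum>a\<in>{a\<in>A. g a = v}. f a)"
      by (intro sum.cong refl) auto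
    finally show ?thesis .
  qed
  show ?thesis
    unfolding group[of ot] group[of oh] by (rule sum.cong[OF refl]) (use cons in auto)
qed

lemma conservation_flow_across_cut:
  fixes f :: "'b \<Rightarrow> real"
  assumes finA: "finite A" and "finite U"
    and "\<forall>v\<in>U. (\<Sum>a\<in>{a\<in>A. ot a = v}. f a) = (\<Sum>a\<in>{a\<in>A. oh a = v}. f a)"
  shows "(\<Sum>a\<in>{a\<in>A. ot a \<in> U \<and> oh a \<notin> U}. f a) = (\<Sum>a\<in>{a\<in>A. oh a \<in> U \<and> ot a \<notin> U}. f a)"
proof -
  define I where "I = {a\<in>A. ot a \<in> U \<and> oh a \<in> U}"
  let ?Out = "{a\<in>A. ot a \<in> U \<and> oh a \<notin> U}" and ?In = "{a\<in>A. oh a \<in> U \<and> ot a \<notin> U}"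
  have "{a\<in>A. ot a \<in> U} = I \<union> ?Out" "{a\<in>A. oh a \<in> U} = I \<union> ?In"
    unfolding I_def by auto
  moreover have "sum f (I \<union> ?Out) = sum f I + sum f ?Out" "sum f (I \<union> ?In) = sum f I + sum f ?In"
    by (rule sum.union_disjoint; use finA in \<open>auto simp: I_def\<close>)+
  ultimately have "sum f I + sum f ?Out = sum f I + sum f ?In"
    using conservation_sum_tails_eq_sum_heads[OF assms] by simp
  then show ?thesis by simp
qed

lemma card_le_mult_card_of_balanced_sums:
  fixes f :: "'b \<Rightarrow> real"
  assumes "finite B" "finite C" "B \<inter> C = {}"
    and bounds: "\<forall>a\<in>B \<union> C. 1 \<le> f a \<and> f a \<le> k - 1"
    and balanced: "(\<Sum>a\<in>B. f a) = (\<Sum>a\<in>C. f a)"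
  shows "real (card (B \<union> C)) \<le> k * card B"
proof -
  have "real (card C) = (\<Sum>a\<in>C. 1)" by simp
  also have "\<dots> \<le> (\<Sum>a\<in>C. f a)" by (rule sum_mono) (use bounds in auto)
  also have "\<dots> = (\<Sum>a\<in>B. f a)" by (rule balanced[symmetric])
  also have "\<dots> \<le> (\<Sum>a\<in>B. k - 1)" by (rule sum_mono) (use bounds in auto)
  finally have "real (card C) \<le> (k - 1) * card B" by (simp add: mult.commute)
  then show ?thesis
    using assms(1-3) by (simp add: card_Un_disjoint algebra_simps)
qed

lemma nz_circular_flow_in_arcs_balanced:
  assumes flow: "nz_circular_flow V A tail head k fw f"
    and "finite A" "finite U" "U \<subseteq> V"
    and closed: "out_arcs A tail head U = {}"
    and P: "P = fw \<or> P = Not \<circ> fw"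
  shows "real (card (in_arcs A tail head U)) \<le> k * card {a \<in> in_arcs A tail head U. P a}"
proof -
  let ?ot = "ori_tail fw tail head" and ?oh = "ori_head fw tail head"
  let ?Kept = "{a \<in> in_arcs A tail head U. fw a}"
    and ?Reversed = "{a \<in> in_arcs A tail head U. \<not> fw a}"
  have "\<forall>a\<in>A. tail a \<in> U \<longrightarrow> head a \<in> U"
    using closed unfolding out_arcs_def by auto
  then have "{a\<in>A. ?ot a \<in> U \<and> ?oh a \<notin> U} = ?Reversed"
    and "{a\<in>A. ?oh a \<in> U \<and> ?ot a \<notin> U} = ?Kept"
    unfolding in_arcs_def ori_tail_def ori_head_def by auto
  moreover have "(\<Sum>a\<in>{a\<in>A. ?ot a \<in> U \<and> ?oh a \<notin> U}. f a) = (\<Sum>a\<in>{a\<in>A. ?oh a \<in> U \<and> ?ot a \<notin> U}. f a)"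
    by (rule conservation_flow_across_cut[OF \<open>finite A\<close> \<open>finite U\<close>])
      (use flow \<open>U \<subseteq> V\<close> in \<open>auto simp: nz_circular_flow_def\<close>)
  ultimately have balanced: "(\<Sum>a\<in>?Reversed. f a) = (\<Sum>a\<in>?Kept. f a)"
    by simp
  have split: "in_arcs A tail head U = ?Kept \<union> ?Reversed" by auto
  have fin: "finite (in_arcs A tail head U)"
    using \<open>finite A\<close> unfolding in_arcs_def by simp
  have bounds: "\<forall>a\<in>?Kept \<union> ?Reversed. 1 \<le> f a \<and> f a \<le> k - 1"
    using flow unfolding nz_circular_flow_def in_arcs_def by auto
  have disjoint: "?Kept \<inter> ?Reversed = {}" by auto
  from P show ?thesis
  proof
    assume "P = fw"
    then show ?thesis
      using card_le_mult_card_of_balanced_sums[OF _ _ disjoint bounds balanced[symmetric]] fin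
      by (subst split) auto
  next
    assume "P = Not \<circ> fw"
    then show ?thesis
      using card_le_mult_card_of_balanced_sums[OF _ _ _ _ balanced, of k] disjoint bounds fin
      by (subst split) (auto simp: Un_commute Int_commute)
  qed
qed

lemma min_dicut_size_le_card_in_arcs:
  assumes "digraph V A tail head" "min_dicut_size V A tail head \<tau>"
    and "U \<noteq> {}" "U \<subset> V" "out_arcs A tail head U = {}"
  shows "\<tau> \<le> card (in_arcs A tail head U)"
proof -
  have arcs: "\<forall>a\<in>A. tail a \<in> V \<and> head a \<in> V"
    using assms(1) unfolding digraph_def by auto
  then have "dicut_shore V A tail head (V - U)"
    using assms(3-5) unfolding dicut_shore_def in_arcs_def out_arcs_def by auto
  moreover have "out_arcs A tail head (V - U) = in_arcs A tail head U"
    using arcs assms(4) unfolding out_arcs_def in_arcs_def by auto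
  ultimately show ?thesis
    using assms(2) unfolding min_dicut_size_def by metis
qed

definition reverse_selection :: "nat \<Rightarrow> ('b \<Rightarrow> bool) \<Rightarrow> 'b + 'b \<Rightarrow> nat" where
  "reverse_selection t P e = (case e of Inl a \<Rightarrow> t | Inr a \<Rightarrow> of_bool (P a))"

lemma is_SCD_reverse_selection:
  assumes finA: "finite A"
    and closed_cuts: "\<And>U. U \<noteq> {} \<Longrightarrow> U \<subset> V \<Longrightarrow> out_arcs A tail head U = {} \<Longrightarrow>
                        t \<le> card {a \<in> in_arcs A tail head U. P a}"
  shows "is_SCD V A tail head t (reverse_selection t P)"
  unfolding is_SCD_def
proof (intro allI impI)
  fix U assume U: "U \<noteq> {} \<and> U \<subset> V"
  let ?x = "reverse_selection t P" and ?Out = "bi_out A tail head U"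
  have finOut: "finite ?Out"
    unfolding bi_out_def bi_arcs_def using finA by auto
  show "t \<le> (\<Sum>e\<in>?Out. ?x e)"
  proof (cases "out_arcs A tail head U = {}")
    case False
    then obtain a where "a \<in> out_arcs A tail head U" by blast
    then have "Inl a \<in> ?Out"
      unfolding out_arcs_def bi_out_def bi_arcs_def by auto
    then have "?x (Inl a) \<le> (\<Sum>e\<in>?Out. ?x e)"
      using finOut by (intro member_le_sum) auto
    then show ?thesis by (simp add: reverse_selection_def)
  next
    case True
    let ?S = "{a \<in> in_arcs A tail head U. P a}"
    have "t \<le> card ?S" using closed_cuts U True by blast
    also have "\<dots> = (\<Sum>e\<in>Inr ` ?S. ?x e)"
      by (subst sum.reindex) (auto simp: inj_on_def reverse_selection_def)
    also have "\<dots> \<le> (\<Sum>e\<in>?Out. ?x e)"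
      by (rule sum_mono2[OF finOut]) (auto simp: bi_out_def bi_arcs_def in_arcs_def)
    finally show ?thesis .
  qed
qed

theorem theorem4:
  fixes V :: "'a set" and A :: "'b set" and tail head :: "'b \<Rightarrow> 'a"
    and \<tau> :: nat and k :: real
  assumes "digraph V A tail head"
    and "min_dicut_size V A tail head \<tau>"
    and "k \<in> \<rat>" and "k \<ge> 2"
    and "has_nz_circular_flow V A tail head k"
  shows "\<exists>x1 x2 :: 'b + 'b \<Rightarrow> nat.
           (\<forall>e\<in>bi_arcs A. x1 e + x2 e \<le> wD \<tau> e) \<and>
           is_SCD V A tail head (nat \<lfloor>real \<tau> / k\<rfloor>) x1 \<and>
           is_SCD V A tail head (nat \<lfloor>real \<tau> / k\<rfloor>) x2"
proof -
  obtain fw f where flow: "nz_circular_flow V A tail head k fw f"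
    using assms(5) unfolding has_nz_circular_flow_def by blast
  have finV: "finite V" and finA: "finite A"
    using assms(1) unfolding digraph_def by auto
  define t where "t = nat \<lfloor>real \<tau> / k\<rfloor>"
  have t_le: "real t \<le> real \<tau> / k"
    using assms(4) unfolding t_def by simp
  moreover have "real \<tau> / k \<le> real \<tau> / 2"
    using assms(4) by (intro divide_left_mono) auto
  ultimately have "t + t \<le> \<tau>" by linarith
  have "is_SCD V A tail head t (reverse_selection t P)" if "P = fw \<or> P = Not \<circ> fw" for P
  proof (rule is_SCD_reverse_selection[OF finA])
    fix U assume U: "U \<noteq> {}" "U \<subset> V" "out_arcs A tail head U = {}"
    have "finite U" "U \<subseteq> V" using U(2) finV finite_subset by auto
    have "real \<tau> \<le> card (in_arcs A tail head U)"
      using min_dicut_size_le_card_in_arcs[OF assms(1,2) U] by simp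
    also have "\<dots> \<le> k * card {a \<in> in_arcs A tail head U. P a}"
      by (rule nz_circular_flow_in_arcs_balanced[OF flow finA \<open>finite U\<close> \<open>U \<subseteq> V\<close> U(3) that])
    finally have "real \<tau> / k \<le> card {a \<in> in_arcs A tail head U. P a}"
      using assms(4) by (simp add: divide_le_eq mult.commute)
    then show "t \<le> card {a \<in> in_arcs A tail head U. P a}"
      using t_le by linarith
  qed
  moreover have "\<forall>e\<in>bi_arcs A. reverse_selection t fw e + reverse_selection t (Not \<circ> fw) e \<le> wD \<tau> e"
    using \<open>t + t \<le> \<tau>\<close> by (auto simp: bi_arcs_def reverse_selection_def)
  ultimately show ?thesis
    unfolding t_def by blast
qed

end
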